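(* Let $K$ be a field of characteristic zero, let $L$ be a $K$-linear functional on $K[u]$ with moments $\mu_s=L(u^s)$, and let $(p_n(x))_{n\ge0}$ be monic polynomials over $K$ with $\deg p_n=n$ and $L(p_m p_n)=\omega_n\delta_{m,n}$, $\omega_n\neq0$ for all $n$. Write $\int f(u)\,d\mu(u)$ for $L(f)$, and put $q_n(y)=\int \frac{p_n(u)}{y-u}\,d\mu(u)$. Let $k,n$ be non-negative integers and $y_1,\dots,y_k$ variables. If $n\ge k$, then $$ \frac{\det\limits_{0\le i,j\le n-1}\left(\int \frac{u^{i+j}\,d\mu(u)}{\prod_{\ell=1}^k(u-y_\ell)}\right)}{\det\limits_{0\le i,j\le n-k-1}(\mu_{i+j})} =(-1)^{nk}\frac{\det\limits_{1\le i,j\le k}\big(q_{n-k+j-1}(y_i)\big)}{\prod_{1\le i<j\le k}(y_i-y_j)}. $$ If $n<k$, then $$ \det\limits_{0\le i,j\le n-1}\left(\int \frac{u^{i+j}\,d\mu(u)}{\prod_{\ell=1}^k(u-y_\ell)}\right) =(-1)^{nk}\frac{\det N}{\prod_{1\le i<j\le k}(y_i-y_j)}, $$ where $N$ is the $k\times k$ matrix whose $i$-th row is $\big(y_i^{k-n-1},\dots,y_i^2,y_i,1,q_0(y_i),q_1(y_i),\dots,q_{n-1}(y_i)\big)$. Determinants of empty matrices and empty products equal $1$.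
   Context: The notation $\int f(u)\,d\mu(u)$ means $L(f)$; it may be read analytically (if $L$ is given by a measure) or formally: $\frac{1}{u-y}$ for a variable $y$ is expanded as $-\sum_{i\ge0}u^iy^{-i-1}$, a formal power series in $1/y$, and $L$ is applied coefficientwise. In particular $q_n(y)=\sum_{i\ge0}L(u^ip_n(u))\,y^{-i-1}$. *)

theory Defs
  imports "HOL-Library.Poly_Mapping"
          "HOL-Computational_Algebra.Formal_Laurent_Series"
          "Jordan_Normal_Form.Determinant"
begin

text \<open>Coefficient ring: Laurent polynomials over K in indeterminates Y_1, Y_2, ...
  (type lpoly).  A formal Laurent series in 1/y_1,...,1/y_k (exponents bounded
  above) is encoded as a formal Laurent series in an auxiliary grading variable t
  with coefficients in lpoly, via the injective ring homomorphism
  y_l |-> Y_l * t^(-1)  (so each monomial prod y_l^(e_l) becomes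
  Y^e * t^(-(e_1+...+e_k))).\<close>

type_synonym 'a lpoly = "(nat \<Rightarrow>\<^sub>0 int) \<Rightarrow>\<^sub>0 'a"

definition lconst :: "'a::comm_ring_1 \<Rightarrow> 'a lpoly" where
  "lconst c = Poly_Mapping.single 0 c"

definition Ymon :: "nat \<Rightarrow> int \<Rightarrow> 'a::comm_ring_1 lpoly" where
  "Ymon l e = Poly_Mapping.single (Poly_Mapping.single l e) 1"

definition yv :: "nat \<Rightarrow> 'a::comm_ring_1 lpoly fls" where
  "yv l = fls_const (Ymon l 1) * fls_X_inv"

text \<open>The formal expansion of 1/(u - y_l) = - sum_{i>=0} u^i y_l^(-i-1), a series in 1/y_l
  whose coefficients are polynomials in u.  Coefficient of t^m (m >= 1) is - u^(m-1) Y_l^(-m).\<close>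
definition cauchy_kernel :: "nat \<Rightarrow> 'a::comm_ring_1 lpoly poly fls" where
  "cauchy_kernel l = Abs_fls (\<lambda>m::int. if m \<ge> 1 then - monom (Ymon l (- m)) (nat (m - 1)) else 0)"

definition applyL :: "('a::comm_ring_1 poly \<Rightarrow> 'a) \<Rightarrow> 'a lpoly poly \<Rightarrow> 'a lpoly" where
  "applyL L P = (\<Sum>i\<le>degree P. coeff P i * lconst (L (monom 1 i)))"

definition flsL :: "('a::comm_ring_1 poly \<Rightarrow> 'a) \<Rightarrow> 'a lpoly poly fls \<Rightarrow> 'a lpoly fls" where
  "flsL L F = Abs_fls (\<lambda>m. applyL L (fls_nth F m))"

definition liftpoly :: "'a::comm_ring_1 poly \<Rightarrow> 'a lpoly poly fls" where
  "liftpoly f = fls_const (map_poly lconst f)"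

text \<open>int f(u) d mu(u) / prod_{l=1}^k (u - y_l)\<close>
definition cint :: "('a::comm_ring_1 poly \<Rightarrow> 'a) \<Rightarrow> 'a poly \<Rightarrow> nat \<Rightarrow> 'a lpoly fls" where
  "cint L f k = flsL L (liftpoly f * (\<Prod>l\<in>{1..k}. cauchy_kernel l))"

text \<open>q_f(y_l) = int f(u) d mu(u) / (y_l - u)\<close>
definition qv :: "('a::comm_ring_1 poly \<Rightarrow> 'a) \<Rightarrow> 'a poly \<Rightarrow> nat \<Rightarrow> 'a lpoly fls" where
  "qv L f l = flsL L (liftpoly f * (- cauchy_kernel l))"

definition const_fls :: "'a::comm_ring_1 \<Rightarrow> 'a lpoly fls" where
  "const_fls c = fls_const (lconst c)"

definition hankel_det :: "('a::comm_ring_1 poly \<Rightarrow> 'a) \<Rightarrow> nat \<Rightarrow> 'a" where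
  "hankel_det L m = det (mat m m (\<lambda>(i,j). L (monom 1 (i + j))))"

definition vand :: "nat \<Rightarrow> 'a::comm_ring_1 lpoly fls" where
  "vand k = (\<Prod>(i,j)\<in>{(i,j). 1 \<le> i \<and> i < j \<and> j \<le> k}. yv i - yv j)"

end

theory Submission
  imports
    Defs
    "Jordan_Normal_Form.Char_Poly"
begin

(*
  Put Pi(x) = prod_l (x - y_l) and I f = int f(u) dmu(u) / Pi(u).  Then I (f Pi) = L f, i.e. I is
  a Geronimus transform of L, and q_m(y_l) = - I (p_m Pi / (x - y_l)).  The left-hand side is the
  Hankel determinant of I.  Expanded in the rows p_0, ..., p_(n-1) and the columns Pi x^j
  (j < n - k), x^b (b < k), it becomes block triangular: one block is triangular with diagonal
  omega_0, ..., omega_(n-k-1), whose product is the Hankel determinant of L, the other is the matrix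
  of mixed moments I (p_(n-k+a) x^b).  The coefficients of Pi/(x - y_i) are the powers of y_i
  times a unitriangular Horner matrix, so (q_(n-k+j)(y_i)) factors as Vandermonde matrix times
  unitriangular matrix times the transposed mixed-moment matrix.  For n < k the same factorisation
  applies, the first k - n columns being powers of y_i.  All identities hold in a ring of formal
  Laurent series with denominators cleared.
*)

section \<open>Determinants\<close>

lemma det_unit_lower_triangular:
  assumes A: "A \<in> carrier_mat n n"
    and upper: "\<And>i j. i < j \<Longrightarrow> j < n \<Longrightarrow> A $$ (i, j) = 0"
    and diag: "\<And>i. i < n \<Longrightarrow> A $$ (i, i) = 1"
  shows "det A = 1"
  using A diag by (simp add: det_lower_triangular[OF upper A] prod_list_diag_prod)

lemma det_upper_triangular_prod:
  assumes A: "A \<in> carrier_mat n n"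
    and lower: "\<And>i j. j < i \<Longrightarrow> i < n \<Longrightarrow> A $$ (i, j) = 0"
  shows "det A = (\<Prod>i<n. A $$ (i, i))"
proof -
  have "upper_triangular A"
    using A lower by (auto simp: upper_triangular_def)
  with A show ?thesis
    by (simp add: det_upper_triangular prod_list_diag_prod atLeast0LessThan)
qed

lemma det_mult_mult_transpose:
  assumes "A \<in> carrier_mat n n" "B \<in> carrier_mat n n" "C \<in> carrier_mat n n"
  shows "det (A * B * C\<^sup>T) = det A * det B * det C"
  using assms by (simp add: det_mult[of _ n] det_transpose)

definition vandermonde_mat :: "nat \<Rightarrow> (nat \<Rightarrow> 'a::comm_ring_1) \<Rightarrow> 'a mat" where
  "vandermonde_mat k z = mat k k (\<lambda>(i, t). z i ^ (k - 1 - t))"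

lemma vandermonde_mat_carrier [simp]: "vandermonde_mat k z \<in> carrier_mat k k"
  by (simp add: vandermonde_mat_def)

lemma vandermonde_mat_column_reduction:
  "vandermonde_mat (Suc k) z
     * mat (Suc k) (Suc k) (\<lambda>(r, c). of_bool (r = c) - (if r = Suc c then z 0 else 0))
   = mat (Suc k) (Suc k) (\<lambda>(i, c). if c < k then z i ^ (k - 1 - c) * (z i - z 0) else 1)"
  (is "?V * ?W = ?M")
proof (rule eq_matI)
  fix i c
  assume "i < dim_row ?M" and "c < dim_col ?M"
  then have i: "i < Suc k" and c: "c < Suc k"
    by auto
  have "(?V * ?W) $$ (i, c)
      = (\<Sum>r<Suc k. if r = c then z i ^ (k - r) else 0)
        - (\<Sum>r<Suc k. if r = Suc c then z i ^ (k - r) * z 0 else 0)"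
    using i c by (simp add: vandermonde_mat_def scalar_prod_def atLeast0LessThan
        right_diff_distrib sum_subtractf if_distrib[where f = "\<lambda>x. _ * x"] cong: if_cong)
  also have "\<dots> = z i ^ (k - c) - (if c < k then z i ^ (k - Suc c) * z 0 else 0)"
    using c by (simp add: sum.delta)
  also have "\<dots> = ?M $$ (i, c)"
  proof (cases "c < k")
    case True
    then have "k - c = Suc (k - 1 - c)"
      by simp
    with i True show ?thesis
      by (simp add: algebra_simps)
  qed (use i c in simp)
  finally show "(?V * ?W) $$ (i, c) = ?M $$ (i, c)" .
qed (auto simp: vandermonde_mat_def)

(* Subtracting z 0 times column c + 1 from column c clears the first row except for its last
   entry; moving that column to the front leaves a block triangular matrix. *)
lemma det_vandermonde_mat_Suc:
  fixes z :: "nat \<Rightarrow> 'a::idom"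
  shows "det (vandermonde_mat (Suc k) z)
    = (\<Prod>j<k. z 0 - z (Suc j)) * det (vandermonde_mat k (\<lambda>i. z (Suc i)))"
proof -
  let ?W = "mat (Suc k) (Suc k) (\<lambda>(r, c). of_bool (r = c) - (if r = Suc c then z 0 else 0))"
  let ?M = "mat (Suc k) (Suc k) (\<lambda>(i, c). if c < k then z i ^ (k - 1 - c) * (z i - z 0) else 1)"
  let ?D = "mat k k (\<lambda>(i, j). if i = j then z (Suc i) - z 0 else 0)"
  let ?V = "vandermonde_mat k (\<lambda>i. z (Suc i))"
  have "det (vandermonde_mat (Suc k) z) = det ?M"
    using det_mult[of "vandermonde_mat (Suc k) z" "Suc k" ?W] vandermonde_mat_column_reduction[of k z]
      det_unit_lower_triangular[of ?W "Suc k"]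
    by (simp add: vandermonde_mat_def)
  also have "\<dots> = (-1) ^ (1 * k) * det (mat (1 + k) (1 + k) (\<lambda>(i, j). ?M $$ (i, if j < 1 then j + k else j - 1)))"
    by (rule det_swap_cols) simp
  also have "mat (1 + k) (1 + k) (\<lambda>(i, j). ?M $$ (i, if j < 1 then j + k else j - 1))
      = four_block_mat (1\<^sub>m 1) (0\<^sub>m 1 k) (mat k 1 (\<lambda>_. 1)) (?D * ?V)"
    by (rule eq_matI) (auto simp: vandermonde_mat_def scalar_prod_def atLeast0LessThan
        if_distrib[where f = "\<lambda>x. x * _"] sum.delta' cong: if_cong)
  also have "det (four_block_mat (1\<^sub>m 1) (0\<^sub>m 1 k) (mat k 1 (\<lambda>_. 1)) (?D * ?V)) = det ?D * det ?V"
    by (subst det_four_block_mat_upper_right_zero[of _ 1 _ k]) (auto simp: det_mult[of _ k] vandermonde_mat_def)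
  also have "det ?D = (\<Prod>i<k. z (Suc i) - z 0)"
    by (subst det_upper_triangular_prod[of _ k]) auto
  also have "(\<Prod>i<k. z (Suc i) - z 0) = (-1) ^ k * (\<Prod>j<k. - (z (Suc j) - z 0))"
    by (simp only: prod_uminus card_lessThan) simp
  finally show ?thesis
    by simp
qed

lemma det_vandermonde_mat:
  fixes z :: "nat \<Rightarrow> 'a::idom"
  shows "det (vandermonde_mat k z) = (\<Prod>i<k. \<Prod>j\<in>{Suc i..<k}. z i - z j)"
proof (induction k arbitrary: z)
  case 0
  show ?case
    by (simp add: vandermonde_mat_def)
next
  case (Suc k)
  have "(\<Prod>i<Suc k. \<Prod>j\<in>{Suc i..<Suc k}. z i - z j)
      = (\<Prod>j\<in>{Suc 0..<Suc k}. z 0 - z j) * (\<Prod>i<k. \<Prod>j\<in>{Suc (Suc i)..<Suc k}. z (Suc i) - z j)"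
    by (rule prod.lessThan_Suc_shift)
  also have "\<dots> = (\<Prod>j<k. z 0 - z (Suc j)) * (\<Prod>i<k. \<Prod>j\<in>{Suc i..<k}. z (Suc i) - z (Suc j))"
    by (simp only: prod.shift_bounds_Suc_ivl atLeast0LessThan)
  finally show ?case
    by (simp add: det_vandermonde_mat_Suc Suc.IH)
qed

definition coeff_mat :: "nat \<Rightarrow> nat \<Rightarrow> (nat \<Rightarrow> 'a::zero poly) \<Rightarrow> 'a mat" where
  "coeff_mat r n P = mat r n (\<lambda>(i, a). coeff (P i) a)"

lemma coeff_mat_carrier [simp]: "coeff_mat r n P \<in> carrier_mat r n"
  by (simp add: coeff_mat_def)

section \<open>Linear functionals on polynomials\<close>

lemma coeff_synthetic_div:
  fixes P :: "'a::comm_semiring_1 poly"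
  shows "coeff (synthetic_div P c) b = (\<Sum>s\<in>{Suc b..degree P}. coeff P s * c ^ (s - Suc b))"
proof (induction P arbitrary: b)
  case (pCons a P)
  show ?case
  proof (cases "P = 0")
    case True
    then show ?thesis
      by (cases b) auto
  next
    case False
    then have deg: "degree (pCons a P) = Suc (degree P)"
      by simp
    show ?thesis
    proof (cases b)
      case 0
      have "(\<Sum>s\<in>{Suc 0..degree (pCons a P)}. coeff (pCons a P) s * c ^ (s - Suc 0))
          = (\<Sum>s\<le>degree P. coeff P s * c ^ s)"
        unfolding deg by (subst sum.shift_bounds_cl_Suc_ivl) (simp add: atLeast0AtMost)
      then show ?thesis
        using 0 by (simp add: poly_altdef)
    next
      case (Suc b')
      have "(\<Sum>s\<in>{Suc b..degree (pCons a P)}. coeff (pCons a P) s * c ^ (s - Suc b))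
          = (\<Sum>s\<in>{Suc b'..degree P}. coeff P s * c ^ (s - Suc b'))"
        unfolding deg Suc by (subst sum.shift_bounds_cl_Suc_ivl) simp
      then show ?thesis
        using Suc pCons.IH by simp
    qed
  qed
qed simp

lemma coeff_mult_monom_one:
  fixes P :: "'a::comm_semiring_1 poly"
  shows "coeff (P * monom 1 j) b = (if j \<le> b then coeff P (b - j) else 0)"
  by (simp add: mult.commute[of P] coeff_monom_mult)

locale poly_functional =
  fixes \<Phi> :: "'a::comm_ring_1 poly \<Rightarrow> 'a"
  assumes add: "\<Phi> (P + Q) = \<Phi> P + \<Phi> Q"
    and smult: "\<Phi> (Polynomial.smult c P) = c * \<Phi> P"
begin

lemma zero: "\<Phi> 0 = 0"
  using smult[of 0 0] by simp

lemma uminus: "\<Phi> (- P) = - \<Phi> P"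
  using smult[of "-1" P] by simp

lemma diff: "\<Phi> (P - Q) = \<Phi> P - \<Phi> Q"
  using add[of P "- Q"] by (simp add: uminus)

lemma sum: "\<Phi> (sum f A) = (\<Sum>x\<in>A. \<Phi> (f x))"
  by (induction A rule: infinite_finite_induct) (auto simp: add zero)

lemma mult_expand:
  assumes "\<And>b. N \<le> b \<Longrightarrow> coeff Q b = 0"
  shows "\<Phi> (F * Q) = (\<Sum>b<N. coeff Q b * \<Phi> (F * monom 1 b))"
proof -
  have "Q = (\<Sum>b<N. monom (coeff Q b) b)"
    by (rule poly_eqI) (use assms in \<open>auto simp: coeff_sum coeff_monom\<close>)
  then have "F * Q = (\<Sum>b<N. Polynomial.smult (coeff Q b) (F * monom 1 b))"
    by (metis (no_types, lifting) mult_smult_right smult_monom mult.right_neutral sum.cong sum_distrib_left)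
  then show ?thesis
    by (simp add: sum smult)
qed

lemma gram_mat_factorization:
  assumes P: "\<And>i. i < r \<Longrightarrow> degree (P i) < n"
    and Q: "\<And>j. j < c \<Longrightarrow> degree (Q j) < n"
  shows "mat r c (\<lambda>(i, j). \<Phi> (P i * Q j))
    = coeff_mat r n P * mat n n (\<lambda>(a, b). \<Phi> (monom 1 (a + b))) * (coeff_mat c n Q)\<^sup>T"
    (is "_ = ?R")
proof (rule eq_matI)
  fix i j
  assume "i < dim_row ?R" and "j < dim_col ?R"
  then have i: "i < r" and j: "j < c"
    by (auto simp: coeff_mat_def)
  have "\<Phi> (P i * Q j) = (\<Sum>b<n. coeff (Q j) b * \<Phi> (monom 1 b * P i))"
    using Q[OF j] by (subst mult_expand[of n]) (auto simp: coeff_eq_0 mult.commute)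
  also have "\<dots> = (\<Sum>b<n. (\<Sum>a<n. coeff (P i) a * \<Phi> (monom 1 (a + b))) * coeff (Q j) b)"
    using P[OF i] by (subst mult_expand[of n]) (auto simp: coeff_eq_0 mult_monom add.commute mult.commute)
  also have "\<dots> = ?R $$ (i, j)"
    using i j by (simp add: coeff_mat_def scalar_prod_def atLeast0LessThan)
  finally show "mat r c (\<lambda>(i, j). \<Phi> (P i * Q j)) $$ (i, j) = ?R $$ (i, j)"
    using i j by simp
qed (auto simp: coeff_mat_def)

end

locale orthogonal_polynomials = poly_functional L
  for L :: "'a::comm_ring_1 poly \<Rightarrow> 'a" +
  fixes p :: "nat \<Rightarrow> 'a poly" and \<omega> :: "nat \<Rightarrow> 'a"
  assumes monic: "lead_coeff (p m) = 1"
    and degree_p: "degree (p m) = m"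
    and orthogonal: "L (p m * p m') = (if m = m' then \<omega> m' else 0)"
begin

lemma coeff_p_self: "coeff (p i) i = 1"
  using monic[of i] by (simp add: degree_p)

lemma coeff_p_above: "i < j \<Longrightarrow> coeff (p i) j = 0"
  by (simp add: coeff_eq_0 degree_p)

lemma orthogonal_lower_degree:
  assumes "\<And>j. i \<le> j \<Longrightarrow> coeff f j = 0"
  shows "L (p i * f) = 0"
  using assms
proof (induction "degree f" arbitrary: f rule: less_induct)
  case less
  show ?case
  proof (cases "f = 0")
    case True
    then show ?thesis
      by (simp add: zero)
  next
    case False
    define d where "d = degree f"
    have "d < i"
      using less.prems False by (metis d_def leading_coeff_0_iff not_le)
    define g where "g = f - Polynomial.smult (coeff f d) (p d)"
    have g_high: "coeff g j = 0" if "i \<le> j" for j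
      using less.prems[OF that] that \<open>d < i\<close> by (simp add: g_def coeff_p_above)
    have "L (p i * g) = 0"
    proof (cases "g = 0")
      case False
      have "degree g \<le> d"
        unfolding g_def d_def
        by (rule degree_diff_le) (auto simp: degree_p intro: degree_smult_le[THEN order_trans])
      moreover have "coeff g d = 0"
        by (simp add: g_def coeff_p_self)
      ultimately have "degree g < degree f"
        using False by (metis d_def le_neq_implies_less leading_coeff_0_iff)
      then show ?thesis
        using less.hyps g_high by blast
    qed (simp add: zero)
    moreover have "p i * f = p i * g + Polynomial.smult (coeff f d) (p i * p d)"
      by (simp add: g_def algebra_simps)
    ultimately show ?thesis
      using \<open>d < i\<close> by (simp add: add smult orthogonal)
  qed
qed

lemma orthogonal_monom: "j < i \<Longrightarrow> L (p i * monom 1 j) = 0"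
  by (rule orthogonal_lower_degree) (simp add: coeff_monom)

lemma L_p_mult_monom_self: "L (p i * monom 1 i) = \<omega> i"
proof -
  have "L (p i * (p i - monom 1 i)) = 0"
    by (rule orthogonal_lower_degree) (auto simp: coeff_monom coeff_p_self coeff_p_above)
  then show ?thesis
    by (simp add: right_diff_distrib diff orthogonal)
qed

lemma hankel_det_eq_prod: "hankel_det L n = (\<Prod>i<n. \<omega> i)"
proof -
  have "mat n n (\<lambda>(i, j). L (p i * monom 1 j))
      = coeff_mat n n p * mat n n (\<lambda>(a, b). L (monom 1 (a + b))) * (coeff_mat n n (monom 1))\<^sup>T"
    by (rule gram_mat_factorization) (auto simp: degree_p degree_monom_eq)
  also have "coeff_mat n n (monom 1) = 1\<^sub>m n"
    by (rule eq_matI) (auto simp: coeff_mat_def)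
  finally have "det (mat n n (\<lambda>(i, j). L (p i * monom 1 j))) = det (coeff_mat n n p) * hankel_det L n"
    by (simp add: det_mult[of _ n] hankel_det_def)
  also have "det (coeff_mat n n p) = 1"
    by (rule det_unit_lower_triangular) (auto simp: coeff_mat_def coeff_p_self coeff_p_above)
  finally show ?thesis
    by (subst (asm) det_upper_triangular_prod[of _ n]) (auto simp: orthogonal_monom L_p_mult_monom_self)
qed

end

section \<open>Geronimus transforms\<close>

locale geronimus_transform =
  I: poly_functional I + L: orthogonal_polynomials L p \<omega> + emb: map_poly_comm_ring_hom emb
  for I :: "'r::idom poly \<Rightarrow> 'r" and L :: "'a::comm_ring_1 poly \<Rightarrow> 'a"
    and p :: "nat \<Rightarrow> 'a poly" and \<omega> :: "nat \<Rightarrow> 'a" and emb :: "'a \<Rightarrow> 'r" +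
  fixes nodal :: "'r poly" and k :: nat
  assumes I_mult_nodal: "\<And>f. I (map_poly emb f * nodal) = emb (L f)"
    and degree_nodal: "degree nodal = k"
    and monic_nodal: "lead_coeff nodal = 1"
begin

definition p_emb :: "nat \<Rightarrow> 'r poly" where
  "p_emb i = map_poly emb (p i)"

definition nodal_basis :: "nat \<Rightarrow> nat \<Rightarrow> 'r poly" where
  "nodal_basis m j = (if j < m then nodal * monom 1 j else monom 1 (j - m))"

definition horner_coeff :: "nat \<Rightarrow> nat \<Rightarrow> 'r" where
  "horner_coeff t b = (if b \<le> t then coeff nodal (k - t + b) else 0)"

lemma coeff_nodal_top: "coeff nodal k = 1"
  using monic_nodal by (simp add: degree_nodal)

lemma coeff_nodal_above: "k < j \<Longrightarrow> coeff nodal j = 0"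
  by (simp add: coeff_eq_0 degree_nodal)

lemma coeff_p_emb: "coeff (p_emb i) a = emb (coeff (p i) a)"
  by (simp add: p_emb_def)

lemma degree_p_emb: "degree (p_emb i) \<le> i"
  using degree_map_poly_le[of emb "p i"] by (simp add: p_emb_def L.degree_p)

lemma det_coeff_mat_p_emb: "det (coeff_mat n n p_emb) = 1"
  by (rule det_unit_lower_triangular)
    (auto simp: coeff_mat_def coeff_p_emb L.coeff_p_self L.coeff_p_above)

lemma I_p_emb_mult_nodal: "I (p_emb i * (nodal * monom 1 j)) = emb (L (p i * monom 1 j))"
proof -
  have "map_poly emb (p i * monom 1 j) = p_emb i * monom 1 j"
    by (simp add: p_emb_def emb.hom_mult)
  then have "p_emb i * (nodal * monom 1 j) = map_poly emb (p i * monom 1 j) * nodal"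
    by (simp add: ac_simps)
  then show ?thesis
    by (simp only: I_mult_nodal)
qed

lemma det_p_emb_moment_mat:
  "det (mat n n (\<lambda>(a, b). I (p_emb a * monom 1 b))) = hankel_det I n"
proof -
  have "mat n n (\<lambda>(a, b). I (p_emb a * monom 1 b))
      = coeff_mat n n p_emb * mat n n (\<lambda>(a, b). I (monom 1 (a + b))) * (coeff_mat n n (monom 1))\<^sup>T"
    by (rule I.gram_mat_factorization) (auto intro: le_less_trans[OF degree_p_emb] simp: degree_monom_eq)
  also have "coeff_mat n n (monom 1) = 1\<^sub>m n"
    by (rule eq_matI) (auto simp: coeff_mat_def)
  finally show ?thesis
    by (simp add: det_mult[of _ n] hankel_det_def det_coeff_mat_p_emb)
qed

lemma det_coeff_mat_nodal_basis:
  "det (coeff_mat (k + m) (k + m) (nodal_basis m)) = (-1) ^ (k * m)"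
proof -
  let ?B = "coeff_mat (k + m) (k + m) (nodal_basis m)"
  have "det ?B = (-1) ^ (k * m)
      * det (mat (k + m) (k + m) (\<lambda>(i, j). ?B $$ (if i < k then i + m else i - k, j)))"
    by (rule det_swap_rows) (simp add: coeff_mat_def)
  also have "det (mat (k + m) (k + m) (\<lambda>(i, j). ?B $$ (if i < k then i + m else i - k, j))) = 1"
    by (rule det_unit_lower_triangular)
      (auto simp: coeff_mat_def nodal_basis_def coeff_mult_monom_one coeff_nodal_top coeff_nodal_above)
  finally show ?thesis
    by simp
qed

lemma det_nodal_basis_moment_mat:
  "det (mat (m + k) (m + k) (\<lambda>(i, j). I (p_emb i * nodal_basis m j)))
    = emb (hankel_det L m) * det (mat k k (\<lambda>(a, b). I (p_emb (m + a) * monom 1 b)))"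
proof -
  let ?U = "mat m m (\<lambda>(i, j). I (p_emb i * (nodal * monom 1 j)))"
  let ?X = "mat m k (\<lambda>(i, j). I (p_emb i * monom 1 j))"
  let ?D = "mat k k (\<lambda>(a, b). I (p_emb (m + a) * monom 1 b))"
  have "mat (m + k) (m + k) (\<lambda>(i, j). I (p_emb i * nodal_basis m j)) = four_block_mat ?U ?X (0\<^sub>m k m) ?D"
    by (rule eq_matI) (auto simp: nodal_basis_def I_p_emb_mult_nodal L.orthogonal_monom)
  then have "det (mat (m + k) (m + k) (\<lambda>(i, j). I (p_emb i * nodal_basis m j))) = det ?U * det ?D"
    by (simp add: det_four_block_mat_lower_left_zero[of ?U m ?X k "0\<^sub>m k m" ?D])
  also have "det ?U = (\<Prod>i<m. emb (\<omega> i))"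
    by (subst det_upper_triangular_prod[of _ m])
      (auto simp: I_p_emb_mult_nodal L.orthogonal_monom L.L_p_mult_monom_self)
  also have "\<dots> = emb (hankel_det L m)"
    by (simp add: L.hankel_det_eq_prod emb.base.hom_prod)
  finally show ?thesis .
qed

lemma hankel_det_geronimus:
  "(-1) ^ (k * m) * hankel_det I (k + m)
    = emb (hankel_det L m) * det (mat k k (\<lambda>(a, b). I (p_emb (m + a) * monom 1 b)))"
proof -
  have "mat (k + m) (k + m) (\<lambda>(i, j). I (p_emb i * nodal_basis m j))
      = coeff_mat (k + m) (k + m) p_emb * mat (k + m) (k + m) (\<lambda>(a, b). I (monom 1 (a + b)))
        * (coeff_mat (k + m) (k + m) (nodal_basis m))\<^sup>T"
  proof (rule I.gram_mat_factorization)
    show "degree (nodal_basis m j) < k + m" if "j < k + m" for j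
      using that degree_mult_le[of nodal "monom 1 j"]
      by (auto simp: nodal_basis_def degree_monom_eq degree_nodal)
  qed (auto intro: le_less_trans[OF degree_p_emb])
  then have "det (mat (k + m) (k + m) (\<lambda>(i, j). I (p_emb i * nodal_basis m j)))
      = hankel_det I (k + m) * (-1) ^ (k * m)"
    by (simp add: det_mult_mult_transpose[of _ "k + m"] hankel_det_def
        det_coeff_mat_p_emb det_coeff_mat_nodal_basis)
  then show ?thesis
    using det_nodal_basis_moment_mat[of m] by (simp add: add.commute mult.commute)
qed

lemma coeff_synthetic_div_nodal:
  "coeff (synthetic_div nodal c) b = (\<Sum>t<k. c ^ (k - 1 - t) * horner_coeff t b)"
proof -
  have "coeff (synthetic_div nodal c) b = (\<Sum>s\<in>{Suc b..k}. coeff nodal s * c ^ (s - Suc b))"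
    by (simp add: coeff_synthetic_div degree_nodal)
  also have "\<dots> = (\<Sum>t\<in>{b..<k}. c ^ (k - 1 - t) * coeff nodal (k - t + b))"
    by (rule sum.reindex_bij_witness[where i = "\<lambda>t. k - t + b" and j = "\<lambda>s. k + b - s"]) auto
  also have "\<dots> = (\<Sum>t<k. c ^ (k - 1 - t) * horner_coeff t b)"
    by (rule sum.mono_neutral_cong_left) (auto simp: horner_coeff_def)
  finally show ?thesis .
qed

lemma I_mult_synthetic_div_nodal:
  "I (F * synthetic_div nodal c)
    = (\<Sum>t<k. c ^ (k - 1 - t) * (\<Sum>b<k. horner_coeff t b * I (F * monom 1 b)))"
proof -
  have "I (F * synthetic_div nodal c) = (\<Sum>b<k. coeff (synthetic_div nodal c) b * I (F * monom 1 b))"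
    by (rule I.mult_expand) (auto simp: coeff_synthetic_div_nodal horner_coeff_def)
  also have "\<dots> = (\<Sum>t<k. c ^ (k - 1 - t) * (\<Sum>b<k. horner_coeff t b * I (F * monom 1 b)))"
    unfolding coeff_synthetic_div_nodal sum_distrib_left sum_distrib_right
    by (subst sum.swap) (simp add: mult.assoc)
  finally show ?thesis .
qed

lemma det_horner_mat: "n \<le> k \<Longrightarrow> det (mat n n (\<lambda>(t, b). horner_coeff t b)) = 1"
  by (rule det_unit_lower_triangular) (auto simp: horner_coeff_def coeff_nodal_top)

lemma det_cauchy_mat:
  "det (mat k k (\<lambda>(i, j). - I (F j * synthetic_div nodal (z i))))
    = (-1) ^ k * det (vandermonde_mat k z) * det (mat k k (\<lambda>(j, b). I (F j * monom 1 b)))"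
proof -
  let ?U = "mat k k (\<lambda>(t, b). horner_coeff t b)"
  let ?D = "mat k k (\<lambda>(j, b). I (F j * monom 1 b))"
  let ?R = "(-1) \<cdot>\<^sub>m (vandermonde_mat k z * ?U * ?D\<^sup>T)"
  have "mat k k (\<lambda>(i, j). - I (F j * synthetic_div nodal (z i))) = ?R"
  proof (rule eq_matI)
    fix i j
    assume "i < dim_row ?R" and "j < dim_col ?R"
    then have i: "i < k" and j: "j < k"
      by (auto simp: vandermonde_mat_def)
    have "?R $$ (i, j) = - (\<Sum>b<k. (\<Sum>t<k. z i ^ (k - 1 - t) * horner_coeff t b) * I (F j * monom 1 b))"
      using i j by (simp add: vandermonde_mat_def scalar_prod_def atLeast0LessThan)
    also have "\<dots> = - I (F j * synthetic_div nodal (z i))"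
      unfolding I_mult_synthetic_div_nodal sum_distrib_left sum_distrib_right
      by (subst sum.swap) (simp add: mult.assoc)
    finally show "mat k k (\<lambda>(i, j). - I (F j * synthetic_div nodal (z i))) $$ (i, j) = ?R $$ (i, j)"
      using i j by simp
  qed (auto simp: vandermonde_mat_def)
  then show ?thesis
    by (simp add: det_mult_mult_transpose[of _ k] det_horner_mat vandermonde_mat_def)
qed

theorem hankel_det_vandermonde:
  assumes "k \<le> n"
  shows "hankel_det I n * det (vandermonde_mat k z)
    = (-1) ^ (n * k) * emb (hankel_det L (n - k))
      * det (mat k k (\<lambda>(i, j). - I (p_emb (n - k + j) * synthetic_div nodal (z i))))"
proof -
  obtain m where n: "n = k + m"
    using assms le_Suc_ex by blast
  let ?V = "det (vandermonde_mat k z)"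
  have "n * k + k + k * m = 2 * (k * m) + k * Suc k"
    by (simp add: n algebra_simps)
  moreover have "even (k * Suc k)"
    by simp
  ultimately have "even (n * k + k + k * m)"
    by (metis dvd_add dvd_triv_left)
  then have sign: "(-1::'r) ^ (n * k) * (-1) ^ k * (-1) ^ (k * m) = 1"
    unfolding power_add[symmetric] by (rule neg_one_even_power)
  have "hankel_det I n * ?V = ((-1) ^ (n * k) * (-1) ^ k * (-1) ^ (k * m)) * hankel_det I n * ?V"
    by (simp add: sign)
  also have "\<dots> = (-1) ^ (n * k) * ((-1) ^ k * ?V * ((-1) ^ (k * m) * hankel_det I (k + m)))"
    by (simp only: n ac_simps)
  also have "\<dots> = (-1) ^ (n * k)
      * ((-1) ^ k * ?V * (emb (hankel_det L m) * det (mat k k (\<lambda>(a, b). I (p_emb (m + a) * monom 1 b)))))"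
    by (simp only: hankel_det_geronimus)
  also have "\<dots> = (-1) ^ (n * k) * emb (hankel_det L m)
      * det (mat k k (\<lambda>(i, j). - I (p_emb (m + j) * synthetic_div nodal (z i))))"
    by (subst det_cauchy_mat) (simp only: ac_simps)
  finally show ?thesis
    by (simp add: n)
qed

definition completed_coeff_mat :: "nat \<Rightarrow> 'r mat" where
  "completed_coeff_mat n = mat k k (\<lambda>(t, j). if j < k - n then (if t = n + j then 1 else 0)
     else - (\<Sum>b<k. horner_coeff t b * I (p_emb (j - (k - n)) * monom 1 b)))"

lemma completed_coeff_mat_carrier [simp]: "completed_coeff_mat n \<in> carrier_mat k k"
  by (simp add: completed_coeff_mat_def)

lemma completed_mat_factorization:
  assumes "n < k"
  shows "mat k k (\<lambda>(i, j). if j < k - n then z i ^ (k - n - 1 - j)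
            else - I (p_emb (j - (k - n)) * synthetic_div nodal (z i)))
    = vandermonde_mat k z * completed_coeff_mat n"
    (is "?N = ?R")
proof (rule eq_matI)
  fix i j
  assume "i < dim_row ?R" and "j < dim_col ?R"
  then have i: "i < k" and j: "j < k"
    by (auto simp: vandermonde_mat_def completed_coeff_mat_def)
  show "?N $$ (i, j) = ?R $$ (i, j)"
  proof (cases "j < k - n")
    case True
    have "?R $$ (i, j) = (\<Sum>t<k. if t = n + j then z i ^ (k - 1 - t) else 0)"
      using i j True by (simp add: vandermonde_mat_def completed_coeff_mat_def scalar_prod_def
          atLeast0LessThan if_distrib[where f = "\<lambda>x. _ * x"] cong: if_cong)
    also have "\<dots> = z i ^ (k - n - 1 - j)"
      using True by (simp add: sum.delta)
    finally show ?thesis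
      using i j True by simp
  next
    case False
    have "?R $$ (i, j)
        = (\<Sum>t<k. z i ^ (k - 1 - t) * - (\<Sum>b<k. horner_coeff t b * I (p_emb (j - (k - n)) * monom 1 b)))"
      using i j False by (simp add: vandermonde_mat_def completed_coeff_mat_def scalar_prod_def atLeast0LessThan)
    also have "\<dots> = - I (p_emb (j - (k - n)) * synthetic_div nodal (z i))"
      by (simp add: I_mult_synthetic_div_nodal sum_negf)
    finally show ?thesis
      using i j False by simp
  qed
qed (auto simp: vandermonde_mat_def completed_coeff_mat_def)

lemma det_completed_coeff_mat:
  assumes "n < k"
  shows "det (completed_coeff_mat n) = (-1) ^ ((k - n) * n + n) * hankel_det I n"
proof -
  define d where "d = k - n"
  have k: "k = d + n"
    using assms by (simp add: d_def)
  let ?Z = "completed_coeff_mat n"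
  let ?U = "mat n n (\<lambda>(t, b). horner_coeff t b)"
  let ?D = "mat n n (\<lambda>(a, b). I (p_emb a * monom 1 b))"
  let ?X = "mat d n (\<lambda>(i, j). ?Z $$ (i + n, j + d))"
  have "det ?Z = (-1) ^ (d * n) * det (mat (d + n) (d + n) (\<lambda>(i, j). ?Z $$ (if i < d then i + n else i - d, j)))"
    using completed_coeff_mat_carrier[of n] by (intro det_swap_rows) (simp only: k)
  also have "mat (d + n) (d + n) (\<lambda>(i, j). ?Z $$ (if i < d then i + n else i - d, j))
      = four_block_mat (1\<^sub>m d) ?X (0\<^sub>m n d) ((-1) \<cdot>\<^sub>m (?U * ?D\<^sup>T))"
  proof (rule eq_matI)
    fix i j
    assume "i < dim_row (four_block_mat (1\<^sub>m d) ?X (0\<^sub>m n d) ((-1) \<cdot>\<^sub>m (?U * ?D\<^sup>T)))"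
      and "j < dim_col (four_block_mat (1\<^sub>m d) ?X (0\<^sub>m n d) ((-1) \<cdot>\<^sub>m (?U * ?D\<^sup>T)))"
    then have i: "i < d + n" and j: "j < d + n"
      by auto
    consider "i < d" | "d \<le> i" "j < d" | "d \<le> i" "d \<le> j"
      by linarith
    then show "mat (d + n) (d + n) (\<lambda>(i, j). ?Z $$ (if i < d then i + n else i - d, j)) $$ (i, j)
      = four_block_mat (1\<^sub>m d) ?X (0\<^sub>m n d) ((-1) \<cdot>\<^sub>m (?U * ?D\<^sup>T)) $$ (i, j)"
    proof cases
      case 3
      have "(\<Sum>b<k. horner_coeff (i - d) b * I (p_emb (j - d) * monom 1 b))
          = (\<Sum>b<n. horner_coeff (i - d) b * I (p_emb (j - d) * monom 1 b))"
        by (rule sum.mono_neutral_right) (use i 3 assms in \<open>auto simp: horner_coeff_def\<close>)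
      with i j 3 assms show ?thesis
        by (simp add: completed_coeff_mat_def scalar_prod_def atLeast0LessThan d_def)
    qed (use i j assms in \<open>auto simp: completed_coeff_mat_def d_def\<close>)
  qed auto
  also have "det (four_block_mat (1\<^sub>m d) ?X (0\<^sub>m n d) ((-1) \<cdot>\<^sub>m (?U * ?D\<^sup>T)))
      = det (1\<^sub>m d) * det ((-1) \<cdot>\<^sub>m (?U * ?D\<^sup>T))"
    by (rule det_four_block_mat_lower_left_zero) auto
  also have "det ((-1) \<cdot>\<^sub>m (?U * ?D\<^sup>T)) = (-1) ^ n * hankel_det I n"
    using assms by (simp add: det_mult[of _ n] det_transpose[of _ n] det_horner_mat det_p_emb_moment_mat)
  finally show ?thesis
    by (simp add: d_def power_add)
qed

theorem hankel_det_vandermonde_less: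
  assumes "n < k"
  shows "hankel_det I n * det (vandermonde_mat k z)
    = (-1) ^ (n * k) * det (mat k k (\<lambda>(i, j). if j < k - n then z i ^ (k - n - 1 - j)
        else - I (p_emb (j - (k - n)) * synthetic_div nodal (z i))))"
proof -
  obtain d where k: "k = n + d"
    using assms less_imp_add_positive by blast
  have "n * k + ((k - n) * n + n) = 2 * ((k - n) * n) + n * Suc n"
    by (simp add: k algebra_simps)
  moreover have "even (n * Suc n)"
    by simp
  ultimately have "even (n * k + ((k - n) * n + n))"
    by (metis dvd_add dvd_triv_left)
  then have sign: "(-1::'r) ^ (n * k) * (-1) ^ ((k - n) * n + n) = 1"
    unfolding power_add[symmetric] by (rule neg_one_even_power)
  have "hankel_det I n * det (vandermonde_mat k z)
      = ((-1) ^ (n * k) * (-1) ^ ((k - n) * n + n)) * hankel_det I n * det (vandermonde_mat k z)"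
    by (simp add: sign)
  also have "\<dots> = (-1) ^ (n * k) * (det (vandermonde_mat k z) * det (completed_coeff_mat n))"
    by (simp add: det_completed_coeff_mat[OF assms] ac_simps)
  also have "\<dots> = (-1) ^ (n * k) * det (mat k k (\<lambda>(i, j). if j < k - n then z i ^ (k - n - 1 - j)
        else - I (p_emb (j - (k - n)) * synthetic_div nodal (z i))))"
    by (simp add: completed_mat_factorization[OF assms] det_mult[of _ k])
  finally show ?thesis .
qed

end

section \<open>The formal Laurent series model\<close>

lemma fls_nth_mult_bounds:
  fixes f g :: "'b::comm_ring_1 fls"
  assumes f: "\<And>i. i < N \<Longrightarrow> fls_nth f i = 0" and g: "\<And>i. i < M \<Longrightarrow> fls_nth g i = 0"
  shows "fls_nth (f * g) n = (\<Sum>i=N..n - M. fls_nth f i * fls_nth g (n - i))"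
proof (cases "f = 0 \<or> g = 0")
  case False
  then have "N \<le> fls_subdegree f" and "M \<le> fls_subdegree g"
    using f g nth_fls_subdegree_nonzero by (metis not_le)+
  then have sub: "{fls_subdegree f..n - fls_subdegree g} \<subseteq> {N..n - M}"
    by auto
  have "fls_nth (f * g) n = (\<Sum>i=fls_subdegree f..n - fls_subdegree g. fls_nth f i * fls_nth g (n - i))"
    by (rule fls_times_nth(2))
  also have "\<dots> = (\<Sum>i=N..n - M. fls_nth f i * fls_nth g (n - i))"
  proof (rule sum.mono_neutral_left[OF _ sub])
    show "\<forall>i\<in>{N..n - M} - {fls_subdegree f..n - fls_subdegree g}. fls_nth f i * fls_nth g (n - i) = 0"
    proof
      fix i
      assume "i \<in> {N..n - M} - {fls_subdegree f..n - fls_subdegree g}"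
      then have "i < fls_subdegree f \<or> n - i < fls_subdegree g"
        by auto
      then show "fls_nth f i * fls_nth g (n - i) = 0"
        by auto
    qed
  qed simp
  finally show ?thesis .
qed auto

definition fls_pconst :: "'b::comm_ring_1 fls \<Rightarrow> 'b poly fls" where
  "fls_pconst c = Abs_fls (\<lambda>m. [:fls_nth c m:])"

lemma fls_nth_pconst [simp]: "fls_nth (fls_pconst c) m = [:fls_nth c m:]"
  unfolding fls_pconst_def by (rule nth_Abs_fls_lower_bound[of "fls_subdegree c"]) simp

lemma comm_ring_hom_fls_pconst: "comm_ring_hom (fls_pconst :: 'b::comm_ring_1 fls \<Rightarrow> _)"
proof
  fix x y :: "'b fls"
  show "fls_pconst (x + y) = fls_pconst x + fls_pconst y"
    by (rule fls_eqI) simp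
  show "fls_pconst (x * y) = fls_pconst x * fls_pconst y"
  proof (rule fls_eqI)
    fix n
    have "fls_nth (fls_pconst x * fls_pconst y) n
        = (\<Sum>i=fls_subdegree x..n - fls_subdegree y. fls_nth (fls_pconst x) i * fls_nth (fls_pconst y) (n - i))"
      by (rule fls_nth_mult_bounds) auto
    also have "\<dots> = [:fls_nth (x * y) n:]"
      by (simp add: fls_times_nth(2) sum_to_poly mult.commute)
    finally show "fls_nth (fls_pconst (x * y)) n = fls_nth (fls_pconst x * fls_pconst y) n"
      by simp
  qed
  show "fls_pconst 1 = 1"
    by (rule fls_eqI) (simp add: one_pCons)
  show "fls_pconst 0 = 0"
    by (rule fls_eqI) simp
qed

interpretation fls_pconst: map_poly_comm_ring_hom fls_pconst
  by (rule map_poly_comm_ring_hom.intro) (rule comm_ring_hom_fls_pconst)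

lemma fls_pconst_const [simp]: "fls_pconst (fls_const c) = fls_const [:c:]"
  by (rule fls_eqI) simp

lemma fls_pconst_X_inv [simp]: "fls_pconst fls_X_inv = fls_X_inv"
  by (rule fls_eqI) (simp add: one_pCons)

lemma comm_ring_hom_lconst: "comm_ring_hom (lconst :: 'b::comm_ring_1 \<Rightarrow> 'b lpoly)"
  by unfold_locales (simp_all add: lconst_def single_add mult_single)

interpretation lconst: comm_ring_hom "lconst :: 'b::comm_ring_1 \<Rightarrow> 'b lpoly"
  by (rule comm_ring_hom_lconst)

lemma comm_ring_hom_const_fls: "comm_ring_hom (const_fls :: 'b::comm_ring_1 \<Rightarrow> 'b lpoly fls)"
  by unfold_locales (simp_all add: const_fls_def lconst.hom_add lconst.hom_mult fls_plus_const fls_const_mult_const)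

interpretation const_fls: map_poly_comm_ring_hom "const_fls :: 'b::comm_ring_1 \<Rightarrow> 'b lpoly fls"
  by (rule map_poly_comm_ring_hom.intro) (rule comm_ring_hom_const_fls)

lemma Ymon_mult: "Ymon l a * Ymon l b = (Ymon l (a + b) :: 'b::comm_ring_1 lpoly)"
  unfolding Ymon_def by (simp add: mult_single single_add)

lemma Ymon_0 [simp]: "Ymon l 0 = (1 :: 'b::comm_ring_1 lpoly)"
  unfolding Ymon_def by simp

lemma fls_nth_cauchy_kernel:
  "fls_nth (cauchy_kernel l) m = (if 1 \<le> m then - monom (Ymon l (- m)) (nat (m - 1)) else 0)"
  unfolding cauchy_kernel_def by (rule nth_Abs_fls_lower_bound[of 1]) simp

definition fls_u :: "'b::comm_ring_1 poly fls" where
  "fls_u = fls_const [:0, 1:]"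

lemma cauchy_kernel_inverse:
  "(fls_u - fls_pconst (yv l)) * cauchy_kernel l = (1 :: 'b::comm_ring_1 lpoly poly fls)"
proof (rule fls_eqI)
  fix n :: int
  have y: "fls_pconst (yv l) * cauchy_kernel l = fls_const [:Ymon l 1:] * (fls_X_inv * cauchy_kernel l)"
    unfolding yv_def by (simp add: fls_pconst.base.hom_mult mult.assoc)
  have "fls_nth ((fls_u - fls_pconst (yv l)) * cauchy_kernel l) n
      = [:0, 1:] * fls_nth (cauchy_kernel l) n - [:Ymon l 1:] * fls_nth (cauchy_kernel l) (n + 1)"
    unfolding left_diff_distrib y fls_u_def by (simp add: fls_X_inv_times_conv_shift)
  also have "\<dots> = (if n = 0 then 1 else 0)"
  proof (cases "1 \<le> n")
    case True
    then have "nat n = Suc (nat (n - 1))"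
      by simp
    with True show ?thesis
      by (simp add: fls_nth_cauchy_kernel smult_monom Ymon_mult monom_Suc)
  qed (auto simp: fls_nth_cauchy_kernel Ymon_mult smult_monom one_pCons)
  finally show "fls_nth ((fls_u - fls_pconst (yv l)) * cauchy_kernel l) n = fls_nth 1 n"
    by simp
qed

lemma applyL_eq_sum:
  "degree P \<le> N \<Longrightarrow> applyL L P = (\<Sum>i\<le>N. coeff P i * lconst (L (monom 1 i)))"
  unfolding applyL_def by (rule sum.mono_neutral_left) (auto simp: coeff_eq_0)

lemma poly_functional_applyL:
  fixes L :: "'b::comm_ring_1 poly \<Rightarrow> 'b"
  shows "poly_functional (applyL L)"
proof
  fix P Q :: "'b lpoly poly" and c
  have "degree (P + Q) \<le> max (degree P) (degree Q)"
    by (rule degree_add_le) auto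
  then show "applyL L (P + Q) = applyL L P + applyL L Q"
    by (simp add: applyL_eq_sum[where N = "max (degree P) (degree Q)"] sum.distrib distrib_right)
  show "applyL L (Polynomial.smult c P) = c * applyL L P"
    by (simp add: applyL_eq_sum[OF degree_smult_le] applyL_eq_sum[where N = "degree P"]
        sum_distrib_left mult.assoc)
qed

interpretation applyL: poly_functional "applyL L" for L
  by (rule poly_functional_applyL)

lemma fls_nth_flsL: "fls_nth (flsL L F) m = applyL L (fls_nth F m)"
  unfolding flsL_def by (rule nth_Abs_fls_lower_bound[of "fls_subdegree F"]) (simp add: applyL.zero)

lemma flsL_add: "flsL L (F + G) = flsL L F + flsL L G"
  by (rule fls_eqI) (simp add: fls_nth_flsL applyL.add)

lemma flsL_uminus: "flsL L (- F) = - flsL L F"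
  by (rule fls_eqI) (simp add: fls_nth_flsL applyL.uminus)

lemma flsL_pconst_mult: "flsL L (fls_pconst c * F) = c * flsL L F"
proof (rule fls_eqI)
  fix m
  have "fls_nth (flsL L (fls_pconst c * F)) m
      = applyL L (\<Sum>i=fls_subdegree c..m - fls_subdegree F. fls_nth (fls_pconst c) i * fls_nth F (m - i))"
    by (simp add: fls_nth_flsL, subst fls_nth_mult_bounds[where N = "fls_subdegree c" and M = "fls_subdegree F"]) auto
  also have "\<dots> = (\<Sum>i=fls_subdegree c..m - fls_subdegree F. fls_nth c i * fls_nth (flsL L F) (m - i))"
    by (simp add: applyL.sum applyL.smult fls_nth_flsL)
  also have "\<dots> = fls_nth (c * flsL L F) m"
    by (rule fls_nth_mult_bounds[symmetric]) (auto simp: fls_nth_flsL applyL.zero)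
  finally show "fls_nth (flsL L (fls_pconst c * F)) m = fls_nth (c * flsL L F) m" .
qed

lemma (in poly_functional) flsL_liftpoly: "flsL \<Phi> (liftpoly f) = const_fls (\<Phi> f)"
proof -
  have "\<Phi> f = (\<Sum>i\<le>degree f. coeff f i * \<Phi> (monom 1 i))"
    using mult_expand[of "Suc (degree f)" f 1] by (simp add: coeff_eq_0 lessThan_Suc_atMost)
  then have "applyL \<Phi> (map_poly lconst f) = lconst (\<Phi> f)"
    by (simp add: applyL_eq_sum[where N = "degree f"] degree_map_poly_le lconst.hom_sum lconst.hom_mult)
  then show ?thesis
    by (intro fls_eqI) (simp add: fls_nth_flsL liftpoly_def const_fls_def applyL.zero)
qed

definition eval_u :: "'b::comm_ring_1 fls poly \<Rightarrow> 'b poly fls" where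
  "eval_u P = poly (map_poly fls_pconst P) fls_u"

lemma comm_ring_hom_eval_u: "comm_ring_hom (eval_u :: 'b::comm_ring_1 fls poly \<Rightarrow> _)"
  by unfold_locales (simp_all add: eval_u_def fls_pconst.hom_add fls_pconst.hom_mult)

interpretation eval_u: comm_ring_hom "eval_u :: 'b::comm_ring_1 fls poly \<Rightarrow> _"
  by (rule comm_ring_hom_eval_u)

lemma eval_u_smult: "eval_u (Polynomial.smult c P) = fls_pconst c * eval_u P"
  by (simp add: eval_u_def fls_pconst.base.map_poly_hom_smult)

lemma eval_u_linear: "eval_u [:- y, 1:] = fls_u - fls_pconst y"
  by (simp add: eval_u_def fls_pconst.base.hom_uminus)

lemma liftpoly_eq_eval_u: "liftpoly f = eval_u (map_poly const_fls f)"
proof (induction f)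
  case (pCons a f)
  have "liftpoly (pCons a f) = fls_const [:lconst a:] + fls_u * liftpoly f"
    unfolding liftpoly_def lconst.map_poly_pCons_hom fls_u_def by (rule fls_eqI) simp
  then show ?case
    by (simp add: pCons.IH const_fls.base.map_poly_pCons_hom fls_pconst.base.map_poly_pCons_hom eval_u_def)
      (simp add: const_fls_def)
qed (simp add: liftpoly_def eval_u_def)

definition cauchy_kernels :: "nat \<Rightarrow> 'b::comm_ring_1 lpoly poly fls" where
  "cauchy_kernels k = (\<Prod>l\<in>{1..k}. cauchy_kernel l)"

definition nodal_poly :: "nat \<Rightarrow> 'b::comm_ring_1 lpoly fls poly" where
  "nodal_poly k = (\<Prod>l\<in>{1..k}. [:- yv l, 1:])"

(* The functional I, for polynomials in x whose coefficients are series in the y_l. *)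
definition cauchy_int :: "('b::comm_ring_1 poly \<Rightarrow> 'b) \<Rightarrow> nat \<Rightarrow> 'b lpoly fls poly \<Rightarrow> 'b lpoly fls" where
  "cauchy_int L k P = flsL L (eval_u P * cauchy_kernels k)"

lemma poly_functional_cauchy_int: "poly_functional (cauchy_int L k)"
  by unfold_locales
    (simp_all add: cauchy_int_def eval_u.hom_add eval_u_smult distrib_right flsL_add mult.assoc flsL_pconst_mult)

lemma cint_eq_cauchy_int: "cint L (monom 1 m) k = cauchy_int L k (monom 1 m)"
  by (simp add: cint_def cauchy_int_def cauchy_kernels_def liftpoly_eq_eval_u)

lemma eval_u_nodal_poly: "eval_u (nodal_poly k) * cauchy_kernels k = 1"
  unfolding nodal_poly_def cauchy_kernels_def eval_u.hom_prod eval_u_linear prod.distrib[symmetric]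
    cauchy_kernel_inverse by simp

lemma (in poly_functional) cauchy_int_nodal_poly:
  "cauchy_int \<Phi> k (map_poly const_fls f * nodal_poly k) = const_fls (\<Phi> f)"
  unfolding cauchy_int_def eval_u.hom_mult liftpoly_eq_eval_u[symmetric] mult.assoc eval_u_nodal_poly
  by (simp add: flsL_liftpoly)

lemma eval_u_synthetic_div_nodal_poly:
  assumes "l \<in> {1..k}"
  shows "eval_u (synthetic_div (nodal_poly k) (yv l)) * cauchy_kernels k = cauchy_kernel l"
proof -
  let ?h = "synthetic_div (nodal_poly k) (yv l)"
  have root: "poly (nodal_poly k) (yv l) = 0"
    unfolding nodal_poly_def poly_prod by (rule prod_zero) (use assms in auto)
  have factor: "[:- yv l, 1:] * ?h = nodal_poly k"
    using synthetic_div_correct'[of "yv l" "nodal_poly k"] unfolding root by simp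
  have "eval_u ?h * cauchy_kernels k
      = eval_u ?h * ((fls_u - fls_pconst (yv l)) * cauchy_kernel l) * cauchy_kernels k"
    by (simp add: cauchy_kernel_inverse)
  also have "\<dots> = eval_u ([:- yv l, 1:] * ?h) * cauchy_kernels k * cauchy_kernel l"
    by (simp only: eval_u.hom_mult eval_u_linear ac_simps)
  also have "\<dots> = cauchy_kernel l"
    unfolding factor eval_u_nodal_poly by simp
  finally show ?thesis .
qed

lemma qv_eq_cauchy_int:
  assumes "l \<in> {1..k}"
  shows "qv L f l = - cauchy_int L k (map_poly const_fls f * synthetic_div (nodal_poly k) (yv l))"
  unfolding qv_def cauchy_int_def eval_u.hom_mult liftpoly_eq_eval_u[symmetric] mult.assoc
    eval_u_synthetic_div_nodal_poly[OF assms]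
  by (simp add: flsL_uminus)

lemma degree_nodal_poly: "degree (nodal_poly k :: 'b::idom lpoly fls poly) = k"
  unfolding nodal_poly_def by (subst degree_prod_sum_eq) auto

lemma lead_coeff_nodal_poly: "lead_coeff (nodal_poly k :: 'b::idom lpoly fls poly) = 1"
  unfolding nodal_poly_def lead_coeff_prod by simp

lemma vand_eq_prod:
  "vand k = (\<Prod>i<k. \<Prod>j\<in>{Suc i..<k}. yv (i + 1) - yv (j + 1) :: 'b::comm_ring_1 lpoly fls)"
proof -
  have "(\<Prod>i<k. \<Prod>j\<in>{Suc i..<k}. yv (i + 1) - yv (j + 1) :: 'b lpoly fls)
      = (\<Prod>(i, j)\<in>(SIGMA i:{..<k}. {Suc i..<k}). yv (i + 1) - yv (j + 1))"
    by (rule prod.Sigma) auto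
  also have "\<dots> = (\<Prod>(i, j)\<in>{(i, j). 1 \<le> i \<and> i < j \<and> j \<le> k}. yv i - yv j)"
    by (rule prod.reindex_bij_witness[where i = "\<lambda>(i, j). (i - 1, j - 1)" and j = "\<lambda>(i, j). (i + 1, j + 1)"]) auto
  finally show ?thesis
    unfolding vand_def by simp
qed

theorem corollary3:
  fixes L :: "'a::field_char_0 poly \<Rightarrow> 'a"
    and p :: "nat \<Rightarrow> 'a poly"
    and \<omega> :: "nat \<Rightarrow> 'a"
    and k n :: nat
  assumes L_add: "\<And>f g. L (f + g) = L f + L g"
    and L_smult: "\<And>c f. L (Polynomial.smult c f) = c * L f"
    and p_monic: "\<And>m. lead_coeff (p m) = 1"
    and p_deg: "\<And>m. degree (p m) = m"
    and p_orth: "\<And>m m'. L (p m * p m') = (if m = m' then \<omega> m' else 0)"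
    and \<omega>_nz: "\<And>m. \<omega> m \<noteq> 0"
  shows "(k \<le> n \<longrightarrow>
           det (mat n n (\<lambda>(i,j). cint L (monom 1 (i + j)) k)) * vand k
           = (-1) ^ (n * k) * const_fls (hankel_det L (n - k))
             * det (mat k k (\<lambda>(i,j). qv L (p (n - k + j)) (i + 1))))
       \<and> (n < k \<longrightarrow>
           det (mat n n (\<lambda>(i,j). cint L (monom 1 (i + j)) k)) * vand k
           = (-1) ^ (n * k)
             * det (mat k k (\<lambda>(i,j). if j < k - n then yv (i + 1) ^ (k - n - 1 - j)
                                     else qv L (p (j - (k - n))) (i + 1))))"
proof -
  interpret L: orthogonal_polynomials L p \<omega>
    using L_add L_smult p_monic p_deg p_orth by unfold_locales
  interpret geronimus_transform "cauchy_int L k" L p \<omega> const_fls "nodal_poly k" k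
    using poly_functional.add[OF poly_functional_cauchy_int] poly_functional.smult[OF poly_functional_cauchy_int]
      L.cauchy_int_nodal_poly degree_nodal_poly lead_coeff_nodal_poly
    by unfold_locales
  let ?y = "\<lambda>i. yv (i + 1) :: 'a lpoly fls"
  have moments: "det (mat n n (\<lambda>(i, j). cint L (monom 1 (i + j)) k)) = hankel_det (cauchy_int L k) n"
    by (simp add: hankel_det_def cint_eq_cauchy_int)
  have vand: "vand k = det (vandermonde_mat k ?y)"
    by (simp add: det_vandermonde_mat vand_eq_prod)
  have q: "qv L (p m) (Suc i) = - cauchy_int L k (p_emb m * synthetic_div (nodal_poly k) (?y i))"
    if "i < k" for i m
    using that by (simp add: qv_eq_cauchy_int p_emb_def)
  have cauchy_mat: "mat k k (\<lambda>(i, j). qv L (p (n - k + j)) (i + 1))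
      = mat k k (\<lambda>(i, j). - cauchy_int L k (p_emb (n - k + j) * synthetic_div (nodal_poly k) (?y i)))"
    by (rule cong_mat) (auto simp: q)
  have completed_mat: "mat k k (\<lambda>(i, j). if j < k - n then yv (i + 1) ^ (k - n - 1 - j)
        else qv L (p (j - (k - n))) (i + 1))
      = mat k k (\<lambda>(i, j). if j < k - n then ?y i ^ (k - n - 1 - j)
        else - cauchy_int L k (p_emb (j - (k - n)) * synthetic_div (nodal_poly k) (?y i)))"
    by (rule cong_mat) (auto simp: q)
  show ?thesis
    unfolding moments vand cauchy_mat completed_mat
    using hankel_det_vandermonde[of n ?y] hankel_det_vandermonde_less[of n ?y] by blast
qed

end
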